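(* Let $\mathbb F_q$ be a finite field with $q$ elements, let $n\ge 2$, let $a_1,\dots,a_n,b\in\mathbb F_q^*$ and let $k,k_1,\dots,k_n,m_1,\dots,m_n$ be positive integers. Let $N_q$ be the number of solutions $(x_1,\dots,x_n)\in\mathbb F_q^n$ of $$(a_1x_1^{m_1}+\dots+a_nx_n^{m_n})^k=bx_1^{k_1}\cdots x_n^{k_n},$$ and let $N_q(0)$ and $N_q^*(0)$ be the numbers of solutions of $a_1x_1^{m_1}+\dots+a_nx_n^{m_n}=0$ in $\mathbb F_q^n$ and in $(\mathbb F_q^* )^n$ respectively. If $b$ is a $k_0$th power in $\mathbb F_q$, then $$N_q=k_0(q-1)^{n-1}+N_q(0)-\frac{k_0+q-1}{q-1}\,N_q^*(0)+\sum_{\substack{\psi^d=\varepsilon\\ \psi^{k_0}\ne\varepsilon}}\psi(b)T(\psi),$$ where the sum is over all multiplicative characters $\psi$ of $\mathbb F_q$ whose order divides $d$ but does not divide $k_0$.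
   Context: $k_0=\gcd(k,k_1,\dots,k_n,q-1)$; $M=\mathrm{lcm}[m_1,\dots,m_n]$; $d_j=\gcd(m_j,q-1)$ for $j=1,\dots,n$; $$d=\gcd\Bigl(\sum_{j=1}^n\frac{k_jM}{m_j}-kM,\ \frac{k_1(q-1)}{d_1},\dots,\frac{k_n(q-1)}{d_n},\ q-1\Bigr).$$ $\varepsilon$ denotes the trivial multiplicative character of $\mathbb F_q$. A multiplicative character $\psi$ is extended to $\mathbb F_q$ by $\psi(0)=1$ if $\psi$ is trivial and $\psi(0)=0$ otherwise. For a multiplicative character $\psi$, $$T(\psi)=\frac1{q-1}\sum_{\substack{x_1,\dots,x_n\in\mathbb F_q^*\\ a_1x_1^{m_1}+\dots+a_nx_n^{m_n}\ne0}}\psi^{k_1}(x_1)\cdots\psi^{k_n}(x_n)\,\bar\psi^{k}(a_1x_1^{m_1}+\dots+a_nx_n^{m_n}).$$ *)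

theory Defs
  imports Complex_Main "HOL-Library.FuncSet"
begin

definition mult_chars :: "('a::field \<Rightarrow> complex) set" where
  "mult_chars = {\<psi>. (\<forall>x y. x \<noteq> 0 \<longrightarrow> y \<noteq> 0 \<longrightarrow> \<psi> (x * y) = \<psi> x * \<psi> y)
                   \<and> (\<forall>x. x \<noteq> 0 \<longrightarrow> \<psi> x \<noteq> 0)
                   \<and> \<psi> 0 = (if (\<forall>x. x \<noteq> 0 \<longrightarrow> \<psi> x = 1) then 1 else 0)}"

definition char_pow_trivial :: "('a::field \<Rightarrow> complex) \<Rightarrow> nat \<Rightarrow> bool" where
  "char_pow_trivial \<psi> e \<longleftrightarrow> (\<forall>x. x \<noteq> 0 \<longrightarrow> \<psi> x ^ e = 1)"

definition diag_form :: "nat \<Rightarrow> (nat \<Rightarrow> 'a::field) \<Rightarrow> (nat \<Rightarrow> nat) \<Rightarrow> (nat \<Rightarrow> 'a) \<Rightarrow> 'a" where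
  "diag_form n a m x = (\<Sum>j\<in>{1..n}. a j * x j ^ m j)"

definition k0_of :: "nat \<Rightarrow> nat \<Rightarrow> (nat \<Rightarrow> nat) \<Rightarrow> nat \<Rightarrow> nat" where
  "k0_of q n kk k = gcd (gcd k (q - 1)) (Gcd (kk ` {1..n}))"

text \<open>d = gcd(sum_j k_j M/m_j - k M, k_1(q-1)/d_1, ..., k_n(q-1)/d_n, q-1),
  with M = lcm(m_1,...,m_n) and d_j = gcd(m_j, q-1).\<close>
definition d_of :: "nat \<Rightarrow> nat \<Rightarrow> (nat \<Rightarrow> nat) \<Rightarrow> (nat \<Rightarrow> nat) \<Rightarrow> nat \<Rightarrow> nat" where
  "d_of q n kk m k =
     (let M = Lcm (m ` {1..n}) in
      nat (gcd (gcd ((\<Sum>j\<in>{1..n}. int (kk j * (M div m j))) - int (k * M)) (int (q - 1)))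
               (int (Gcd ((\<lambda>j. kk j * (q - 1) div gcd (m j) (q - 1)) ` {1..n})))))"

definition T_sum :: "nat \<Rightarrow> (nat \<Rightarrow> 'a::{finite,field}) \<Rightarrow> (nat \<Rightarrow> nat) \<Rightarrow> (nat \<Rightarrow> nat)
                     \<Rightarrow> nat \<Rightarrow> ('a \<Rightarrow> complex) \<Rightarrow> complex" where
  "T_sum n a m kk k \<psi> =
     (1 / of_nat (card (UNIV :: 'a set) - 1)) *
     (\<Sum>x\<in>{x \<in> Pi\<^sub>E {1..n} (\<lambda>_. UNIV - {0}). diag_form n a m x \<noteq> 0}.
        (\<Prod>j\<in>{1..n}. \<psi> (x j) ^ kk j) * cnj (\<psi> (diag_form n a m x)) ^ k)"

end

(*
  Split the solutions according to whether some coordinate vanishes. If one does, the right-hand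
  side is 0 and the equation reduces to a_1 x_1^m_1 + ... + a_n x_n^m_n = 0; otherwise the form is
  nonzero, and orthogonality of the q - 1 multiplicative characters counts these solutions as
  the sum over all characters of psi(b) T(psi). For psi^k0 trivial, psi(b) = 1 because b is a
  k0-th power, and every summand of T(psi) is 1; there are exactly k0 such characters. For the
  remaining characters, the substitution x_j -> c_j x_j with c_j^m_j = mu multiplies T(psi) by
  psi^k_1(c_1)...psi^k_n(c_n) conj(psi)^k(mu); taking c_j = g^(M/m_j), and c_j a d_j-th root of
  unity in a single coordinate, shows that T(psi) = 0 unless psi(g) has order dividing d.
*)

theory Submission
  imports Defs "HOL-Library.Cardinality" "HOL-Algebra.Multiplicative_Group" "HOL-Algebra.Algebraic_Closure_Type"
begin

lemma card_finite_field_ge_2: "CARD('a::{finite,field}) \<ge> 2"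
proof -
  have "card {0, 1::'a} \<le> CARD('a)" by (intro card_mono) auto
  then show ?thesis by simp
qed

lemma finite_field_fermat:
  fixes y :: "'a::{finite,field}"
  assumes "y \<noteq> 0"
  shows "y ^ (CARD('a) - 1) = 1"
proof -
  define U where "U = UNIV - {0::'a}"
  have "bij_betw ((*) y) U U"
    by (rule bij_betw_byWitness[where f' = "\<lambda>x. x / y"]) (use assms in \<open>auto simp: U_def\<close>)
  then have "prod id U = (\<Prod>x\<in>U. y * x)"
    using prod.reindex_bij_betw[of "(*) y" U U id] by simp
  also have "\<dots> = y ^ card U * prod id U"
    by (simp add: prod.distrib)
  finally have "y ^ card U = 1"
    by (auto simp: U_def)
  then show ?thesis by (simp add: U_def card_Diff_singleton)
qed

lemma finite_field_mult_cyclic: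
  obtains g :: "'a::{finite,field}" where "g \<noteq> 0" and "\<And>y. y \<noteq> 0 \<Longrightarrow> \<exists>i. y = g ^ i"
proof -
  let ?R = "ring_of_type_algebra :: 'a ring"
  have carrier: "carrier (Multiplicative_Group.mult_of ?R) = UNIV - {0}"
    unfolding Multiplicative_Group.mult_of_def ring_of_type_algebra_def by simp
  have pow: "x [^]\<^bsub>?R\<^esub> i = x ^ i" for x :: 'a and i :: nat
    by (induction i) (simp_all add: ring_of_type_algebra_def)
  have "\<exists>g\<in>carrier (Multiplicative_Group.mult_of ?R).
      carrier (Multiplicative_Group.mult_of ?R) = {g [^]\<^bsub>?R\<^esub> i | i::nat. i \<in> UNIV}"
    by (rule field.finite_field_mult_group_has_gen[OF field_from_type_algebra]) (simp add: ring_of_type_algebra_def)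
  then obtain g :: 'a where g: "g \<in> UNIV - {0}" and gen: "UNIV - {0} = {g ^ i | i::nat. i \<in> UNIV}"
    unfolding carrier pow by blast
  show ?thesis
  proof (rule that)
    show "g \<noteq> 0" using g by simp
    fix y :: 'a assume "y \<noteq> 0"
    then have "y \<in> {g ^ i | i::nat. i \<in> UNIV}" using gen by blast
    then show "\<exists>i. y = g ^ i" by blast
  qed
qed

(* The convention for the value at 0 makes a character multiplicative on the whole field. *)
lemma mult_char_mult:
  assumes \<psi>: "\<psi> \<in> mult_chars"
  shows "\<psi> (x * y) = \<psi> x * \<psi> y"
proof -
  have mult: "\<And>x y. x \<noteq> 0 \<Longrightarrow> y \<noteq> 0 \<Longrightarrow> \<psi> (x * y) = \<psi> x * \<psi> y"
    and zero: "\<psi> 0 = (if \<forall>x. x \<noteq> 0 \<longrightarrow> \<psi> x = 1 then 1 else 0)"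
    using \<psi> unfolding mult_chars_def by blast+
  show ?thesis
  proof (cases "\<forall>x. x \<noteq> 0 \<longrightarrow> \<psi> x = 1")
    case True
    then have "\<psi> z = 1" for z
      using zero by (cases "z = 0") simp_all
    then show ?thesis by simp
  next
    case False
    then show ?thesis
      using mult zero by (cases "x = 0 \<or> y = 0") auto
  qed
qed

lemma mult_char_one:
  assumes \<psi>: "\<psi> \<in> mult_chars"
  shows "\<psi> 1 = 1"
proof -
  have "\<psi> 1 \<noteq> 0"
    using \<psi> one_neq_zero unfolding mult_chars_def by blast
  moreover have "\<psi> 1 = \<psi> 1 * \<psi> 1"
    using mult_char_mult[OF \<psi>, of 1 1] by simp
  ultimately show ?thesis by simp
qed

lemma mult_char_power: "\<psi> \<in> mult_chars \<Longrightarrow> \<psi> (x ^ e) = \<psi> x ^ e"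
  by (induction e) (simp_all add: mult_char_one mult_char_mult)

lemma mult_char_prod: "\<psi> \<in> mult_chars \<Longrightarrow> \<psi> (prod f A) = (\<Prod>j\<in>A. \<psi> (f j))"
  by (induction A rule: infinite_finite_induct) (simp_all add: mult_char_one mult_char_mult)

lemma mult_char_root_of_unity:
  fixes \<psi> :: "'a::{finite,field} \<Rightarrow> complex"
  assumes "\<psi> \<in> mult_chars" and "x \<noteq> 0"
  shows "\<psi> x ^ (CARD('a) - 1) = 1"
  using finite_field_fermat[OF assms(2)] by (simp add: mult_char_one[OF assms(1)] flip: mult_char_power[OF assms(1)])

lemma mult_char_inverse:
  assumes \<psi>: "\<psi> \<in> mult_chars"
  shows "\<psi> (inverse x) = inverse (\<psi> x)"
proof (cases "x = 0")
  case True
  have "\<psi> 0 = (if \<forall>x. x \<noteq> 0 \<longrightarrow> \<psi> x = 1 then 1 else 0)"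
    using \<psi> unfolding mult_chars_def by blast
  then have "\<psi> 0 = 0 \<or> \<psi> 0 = 1"
    by presburger
  with True show ?thesis by auto
next
  case False
  then have "\<psi> x * \<psi> (inverse x) = 1"
    by (simp add: mult_char_one[OF \<psi>] flip: mult_char_mult[OF \<psi>])
  then show ?thesis
    by (rule inverse_unique[symmetric])
qed

lemma mult_char_cnj:
  fixes \<psi> :: "'a::{finite,field} \<Rightarrow> complex"
  assumes \<psi>: "\<psi> \<in> mult_chars" and x: "x \<noteq> 0"
  shows "cnj (\<psi> x) = inverse (\<psi> x)"
proof -
  have "norm (\<psi> x) ^ (CARD('a) - 1) = 1 ^ (CARD('a) - 1)"
    using mult_char_root_of_unity[OF assms] by (simp flip: norm_power)
  moreover have "CARD('a) - 1 > 0"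
    using card_finite_field_ge_2[where 'a='a] by simp
  ultimately have "norm (\<psi> x) = 1"
    using power_eq_imp_eq_base norm_ge_zero zero_le_one by blast
  then have "\<psi> x * cnj (\<psi> x) = 1"
    by (metis complex_norm_square of_real_1 power_one)
  then show ?thesis
    by (rule inverse_unique[symmetric])
qed

lemma power_mod_eq_power:
  fixes x :: "'b::monoid_mult"
  assumes "x ^ n = 1"
  shows "x ^ (t mod n) = x ^ t"
proof -
  have "x ^ t = (x ^ n) ^ (t div n) * x ^ (t mod n)"
    by (metis div_mult_mod_eq power_add power_mult mult.commute)
  with assms show ?thesis by simp
qed

locale finite_field_generator =
  fixes g :: "'a::{finite,field}"
  assumes generator_nonzero: "g \<noteq> 0"
    and generates: "\<And>y. y \<noteq> 0 \<Longrightarrow> \<exists>i. y = g ^ i"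
begin

lemma card_units_pos: "CARD('a) - 1 > 0"
  using card_finite_field_ge_2[where 'a='a] by simp

lemma generator_power_card_units: "g ^ (CARD('a) - 1) = 1"
  by (rule finite_field_fermat[OF generator_nonzero])

lemma bij_betw_generator_power: "bij_betw (\<lambda>t. g ^ t) {..<CARD('a) - 1} (UNIV - {0})"
proof -
  have image: "(\<lambda>t. g ^ t) ` {..<CARD('a) - 1} = UNIV - {0}"
  proof (intro equalityI subsetI)
    fix y :: 'a assume "y \<in> UNIV - {0}"
    then obtain i where "y = g ^ i" using generates by blast
    then have "y = g ^ (i mod (CARD('a) - 1))" unfolding power_mod_eq_power[OF generator_power_card_units] .
    then show "y \<in> (\<lambda>t. g ^ t) ` {..<CARD('a) - 1}" using card_units_pos by auto
  qed (use generator_nonzero in auto)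
  then have "card ((\<lambda>t. g ^ t) ` {..<CARD('a) - 1}) = card {..<CARD('a) - 1}"
    by (simp add: card_Diff_singleton)
  then show ?thesis
    using image by (simp add: bij_betw_def eq_card_imp_inj_on)
qed

definition dlog :: "'a \<Rightarrow> nat" where
  "dlog = the_inv_into {..<CARD('a) - 1} (\<lambda>t. g ^ t)"

lemma generator_power_dlog: "y \<noteq> 0 \<Longrightarrow> g ^ dlog y = y"
  unfolding dlog_def by (rule f_the_inv_into_f_bij_betw[OF bij_betw_generator_power]) simp

lemma dlog_generator_power: "dlog (g ^ t) = t mod (CARD('a) - 1)"
proof -
  have "g ^ t = g ^ (t mod (CARD('a) - 1))" unfolding power_mod_eq_power[OF generator_power_card_units] ..
  then show ?thesis
    using bij_betw_generator_power card_units_pos unfolding dlog_def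
    by (simp add: bij_betw_def the_inv_into_f_f)
qed

definition chi :: "complex \<Rightarrow> 'a \<Rightarrow> complex" where
  "chi z y = (if y = 0 then (if z = 1 then 1 else 0) else z ^ dlog y)"

lemma chi_generator_power: "z ^ (CARD('a) - 1) = 1 \<Longrightarrow> chi z (g ^ t) = z ^ t"
  using generator_nonzero by (simp add: chi_def dlog_generator_power power_mod_eq_power)

lemma chi_in_mult_chars:
  assumes z: "z ^ (CARD('a) - 1) = 1"
  shows "chi z \<in> mult_chars"
proof -
  have "chi z (x * y) = chi z x * chi z y" if "x \<noteq> 0" "y \<noteq> 0" for x y
  proof -
    have "chi z (x * y) = chi z (g ^ (dlog x + dlog y))"
      using that by (simp add: power_add generator_power_dlog)
    also have "\<dots> = z ^ (dlog x + dlog y)"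
      by (rule chi_generator_power[OF z])
    finally show ?thesis
      using that by (simp add: chi_def power_add)
  qed
  moreover have "z \<noteq> 0"
    using z card_units_pos by (metis zero_neq_one zero_power)
  moreover have "(\<forall>x. x \<noteq> 0 \<longrightarrow> chi z x = 1) \<longleftrightarrow> z = 1"
    using z generator_nonzero chi_generator_power[OF z, of 1] by (auto simp: chi_def)
  ultimately show ?thesis
    unfolding mult_chars_def by (auto simp: chi_def)
qed

lemma char_pow_trivial_iff_generator:
  assumes "\<psi> \<in> mult_chars"
  shows "char_pow_trivial \<psi> e \<longleftrightarrow> \<psi> g ^ e = 1"
proof
  assume "\<psi> g ^ e = 1"
  then have "\<psi> (g ^ i) ^ e = 1" for i
    by (simp add: mult_char_power[OF assms] flip: power_mult) (simp add: power_mult mult.commute)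
  then show "char_pow_trivial \<psi> e"
    unfolding char_pow_trivial_def using generates by blast
qed (use generator_nonzero in \<open>simp add: char_pow_trivial_def\<close>)

lemma mult_char_eqI_generator:
  assumes \<psi>: "\<psi> \<in> mult_chars" and \<phi>: "\<phi> \<in> mult_chars" and eq: "\<psi> g = \<phi> g"
  shows "\<psi> = \<phi>"
proof
  fix x
  show "\<psi> x = \<phi> x"
  proof (cases "x = 0")
    case True
    have "char_pow_trivial \<psi> 1 \<longleftrightarrow> char_pow_trivial \<phi> 1"
      using eq by (simp add: char_pow_trivial_iff_generator[OF \<psi>] char_pow_trivial_iff_generator[OF \<phi>])
    with True \<psi> \<phi> show ?thesis
      unfolding mult_chars_def char_pow_trivial_def by simp
  next
    case False
    then obtain i where "x = g ^ i" using generates by blast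
    then show ?thesis using eq by (simp add: mult_char_power[OF \<psi>] mult_char_power[OF \<phi>])
  qed
qed

lemma bij_betw_mult_chars_roots_unity: "bij_betw (\<lambda>\<psi>. \<psi> g) mult_chars {z. z ^ (CARD('a) - 1) = 1}"
proof (rule bij_betwI')
  fix z :: complex assume "z \<in> {z. z ^ (CARD('a) - 1) = 1}"
  then have "chi z \<in> mult_chars" and "z = chi z g"
    using chi_in_mult_chars chi_generator_power[of z 1] by simp_all
  then show "\<exists>\<psi>\<in>mult_chars. z = \<psi> g" by blast
qed (use mult_char_eqI_generator mult_char_root_of_unity generator_nonzero in auto)

end

lemma sum_roots_unity_power:
  assumes "0 < t" and "t < n"
  shows "(\<Sum>z | z ^ n = 1. (z::complex) ^ t) = 0"
proof -
  let ?R = "{z::complex. z ^ n = 1}"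
  have "\<not> ?R \<subseteq> {z. z ^ t = 1}"
  proof
    assume "?R \<subseteq> {z. z ^ t = 1}"
    then have "card ?R \<le> card {z::complex. z ^ t = 1}"
      using assms by (intro card_mono finite_roots_unity) auto
    then show False
      using assms by (simp add: card_roots_unity_eq)
  qed
  then obtain \<zeta> :: complex where \<zeta>: "\<zeta> ^ n = 1" "\<zeta> ^ t \<noteq> 1" by blast
  then have "\<zeta> \<noteq> 0" using assms by (auto simp: power_0_left)
  then have "bij_betw ((*) \<zeta>) ?R ?R"
    by (intro bij_betw_byWitness[where f' = "\<lambda>z. z / \<zeta>"])
       (auto simp: power_mult_distrib power_divide \<zeta>(1))
  then have "(\<Sum>z\<in>?R. z ^ t) = (\<Sum>z\<in>?R. (\<zeta> * z) ^ t)"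
    by (rule sum.reindex_bij_betw[symmetric])
  also have "\<dots> = \<zeta> ^ t * (\<Sum>z\<in>?R. z ^ t)"
    by (simp add: power_mult_distrib sum_distrib_left)
  finally show ?thesis
    using \<zeta>(2) by (metis mult_cancel_right1 mult_eq_0_iff)
qed

lemma finite_mult_chars: "finite (mult_chars :: ('a::{finite,field} \<Rightarrow> complex) set)"
proof -
  obtain g :: 'a where "finite_field_generator g"
    using finite_field_mult_cyclic by (metis finite_field_generator.intro)
  then interpret finite_field_generator g .
  show ?thesis
    using bij_betw_finite[OF bij_betw_mult_chars_roots_unity] card_units_pos
    by (simp add: finite_roots_unity)
qed

lemma card_mult_chars_pow_trivial:
  assumes "e > 0" and "e dvd CARD('a::{finite,field}) - 1"
  shows "card {\<psi> \<in> (mult_chars :: ('a \<Rightarrow> complex) set). char_pow_trivial \<psi> e} = e"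
proof -
  obtain g :: 'a where "finite_field_generator g"
    using finite_field_mult_cyclic by (metis finite_field_generator.intro)
  then interpret finite_field_generator g .
  have "{z. z ^ e = 1} \<subseteq> {z::complex. z ^ (CARD('a) - 1) = 1}"
    using assms(2) by (auto elim!: dvdE simp: power_mult)
  then have "bij_betw (\<lambda>\<psi>. \<psi> g) {\<psi> \<in> mult_chars. \<psi> g ^ e = 1} {z. z ^ e = 1}"
    using bij_betw_mult_chars_roots_unity unfolding bij_betw_def inj_on_def by auto
  then show ?thesis
    using assms(1) by (simp add: char_pow_trivial_iff_generator bij_betw_same_card card_roots_unity_eq
        cong: conj_cong)
qed

lemma sum_mult_chars:
  fixes w :: "'a::{finite,field}"
  assumes "w \<noteq> 0"
  shows "(\<Sum>\<psi>\<in>mult_chars. \<psi> w) = (if w = 1 then of_nat (CARD('a) - 1) else 0)"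
proof -
  obtain g :: 'a where "finite_field_generator g"
    using finite_field_mult_cyclic by (metis finite_field_generator.intro)
  then interpret finite_field_generator g .
  let ?t = "dlog w"
  have "(\<Sum>\<psi>\<in>mult_chars. \<psi> w) = (\<Sum>\<psi>\<in>mult_chars. \<psi> g ^ ?t)"
    using assms by (intro sum.cong) (simp_all add: generator_power_dlog flip: mult_char_power)
  also have "\<dots> = (\<Sum>z | z ^ (CARD('a) - 1) = 1. z ^ ?t)"
    by (rule sum.reindex_bij_betw[OF bij_betw_mult_chars_roots_unity])
  also have "\<dots> = (if w = 1 then of_nat (CARD('a) - 1) else 0)"
  proof (cases "w = 1")
    case True
    then have "?t = 0"
      using dlog_generator_power[of 0] by simp
    then show ?thesis
      using True card_units_pos by (simp add: card_roots_unity_eq)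
  next
    case False
    then have "0 < ?t"
      using generator_power_dlog[OF assms] by (metis gr0I power_0)
    moreover have "?t < CARD('a) - 1"
      using generator_power_dlog[OF assms] dlog_generator_power by (metis card_units_pos mod_less_divisor)
    ultimately show ?thesis
      using False by (simp add: sum_roots_unity_power)
  qed
  finally show ?thesis .
qed

lemma power_int_gcd_eq_1:
  fixes z :: "'a::field"
  assumes "z \<noteq> 0" and "z powi a = 1" and "z powi b = 1"
  shows "z powi gcd a b = 1"
proof -
  obtain u v where "u * a + v * b = gcd a b"
    using bezout_int by blast
  then have "z powi gcd a b = (z powi a) powi u * (z powi b) powi v"
    using assms(1) by (metis power_int_add power_int_mult mult.commute)
  with assms show ?thesis by simp
qed

lemma power_Gcd_eq_1:
  fixes z :: "'a::field"
  assumes "finite A" and "z \<noteq> 0" and "\<forall>e\<in>A. z ^ e = 1"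
  shows "z ^ Gcd A = 1"
  using assms(1,3)
proof (induction A rule: finite_induct)
  case (insert e A)
  then have "z powi gcd (int e) (int (Gcd A)) = 1"
    by (intro power_int_gcd_eq_1[OF assms(2)]) simp_all
  then show ?case by (simp add: gcd_int_int_eq)
qed simp

definition scale_coords :: "nat \<Rightarrow> (nat \<Rightarrow> 'a::field) \<Rightarrow> (nat \<Rightarrow> 'a) \<Rightarrow> nat \<Rightarrow> 'a" where
  "scale_coords n c x = restrict (\<lambda>j. c j * x j) {1..n}"

lemma diag_form_scale_coords:
  assumes "\<forall>j\<in>{1..n}. c j ^ m j = \<mu>"
  shows "diag_form n a m (scale_coords n c x) = \<mu> * diag_form n a m x"
  unfolding diag_form_def scale_coords_def sum_distrib_left
  by (rule sum.cong) (simp_all add: assms power_mult_distrib)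

lemma scale_coords_in_PiE:
  assumes "x \<in> Pi\<^sub>E {1..n} (\<lambda>_. UNIV - {0})" and "\<forall>j\<in>{1..n}. c j \<noteq> 0"
  shows "scale_coords n c x \<in> Pi\<^sub>E {1..n} (\<lambda>_. UNIV - {0})"
  using assms by (auto simp: scale_coords_def PiE_iff)

lemma scale_coords_inverse:
  assumes "x \<in> Pi\<^sub>E {1..n} A" and "\<forall>j\<in>{1..n}. c j \<noteq> 0"
  shows "scale_coords n (\<lambda>j. inverse (c j)) (scale_coords n c x) = x"
  using assms PiE_arb[OF assms(1)] by (auto simp: scale_coords_def fun_eq_iff)

lemma scale_coords_in_nonvanishing:
  assumes "x \<in> {x \<in> Pi\<^sub>E {1..n} (\<lambda>_. UNIV - {0}). diag_form n a m x \<noteq> 0}"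
    and "\<forall>j\<in>{1..n}. c j \<noteq> 0 \<and> c j ^ m j = \<mu>" and "\<mu> \<noteq> 0"
  shows "scale_coords n c x \<in> {x \<in> Pi\<^sub>E {1..n} (\<lambda>_. UNIV - {0}). diag_form n a m x \<noteq> 0}"
proof -
  have "scale_coords n c x \<in> Pi\<^sub>E {1..n} (\<lambda>_. UNIV - {0})"
    using assms by (intro scale_coords_in_PiE) simp_all
  moreover have "diag_form n a m (scale_coords n c x) \<noteq> 0"
    using assms diag_form_scale_coords[of n c m \<mu> a x] by simp
  ultimately show ?thesis by simp
qed

lemma bij_betw_scale_coords:
  fixes a :: "nat \<Rightarrow> 'a::field"
  assumes c: "\<forall>j\<in>{1..n}. c j \<noteq> 0 \<and> c j ^ m j = \<mu>" and \<mu>: "\<mu> \<noteq> 0"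
  defines "S \<equiv> {x \<in> Pi\<^sub>E {1..n} (\<lambda>_. UNIV - {0}). diag_form n a m x \<noteq> 0}"
  shows "bij_betw (scale_coords n c) S S"
proof (rule bij_betw_byWitness[where f' = "scale_coords n (\<lambda>j. inverse (c j))"])
  have c': "\<forall>j\<in>{1..n}. inverse (c j) \<noteq> 0 \<and> inverse (c j) ^ m j = inverse \<mu>"
    using c by (simp add: power_inverse)
  have \<mu>': "inverse \<mu> \<noteq> 0"
    using \<mu> by simp
  show "\<forall>x\<in>S. scale_coords n (\<lambda>j. inverse (c j)) (scale_coords n c x) = x"
    using c scale_coords_inverse[of _ n _ c] by (auto simp: S_def)
  show "\<forall>x\<in>S. scale_coords n c (scale_coords n (\<lambda>j. inverse (c j)) x) = x"
    using scale_coords_inverse[of _ n _ "\<lambda>j. inverse (c j)"] c' by (auto simp: S_def)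
  show "scale_coords n c ` S \<subseteq> S"
    unfolding S_def by (rule image_subsetI, rule scale_coords_in_nonvanishing[OF _ c \<mu>])
  show "scale_coords n (\<lambda>j. inverse (c j)) ` S \<subseteq> S"
    unfolding S_def by (rule image_subsetI, rule scale_coords_in_nonvanishing[OF _ c' \<mu>'])
qed

lemma T_sum_scale:
  fixes \<psi> :: "'a::{finite,field} \<Rightarrow> complex"
  assumes \<psi>: "\<psi> \<in> mult_chars" and c: "\<forall>j\<in>{1..n}. c j \<noteq> 0 \<and> c j ^ m j = \<mu>" and \<mu>: "\<mu> \<noteq> 0"
  shows "T_sum n a m kk k \<psi> = ((\<Prod>j\<in>{1..n}. \<psi> (c j) ^ kk j) * cnj (\<psi> \<mu>) ^ k) * T_sum n a m kk k \<psi>"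
proof -
  define S where "S = {x \<in> Pi\<^sub>E {1..n} (\<lambda>_. UNIV - {0::'a}). diag_form n a m x \<noteq> 0}"
  define f where "f x = (\<Prod>j\<in>{1..n}. \<psi> (x j) ^ kk j) * cnj (\<psi> (diag_form n a m x)) ^ k" for x
  define K where "K = (\<Prod>j\<in>{1..n}. \<psi> (c j) ^ kk j) * cnj (\<psi> \<mu>) ^ k"
  have "sum f S = (\<Sum>x\<in>S. f (scale_coords n c x))"
    using bij_betw_scale_coords[OF c \<mu>] unfolding S_def by (rule sum.reindex_bij_betw[symmetric])
  also have "\<dots> = (\<Sum>x\<in>S. K * f x)"
  proof (rule sum.cong)
    fix x assume "x \<in> S"
    have "(\<Prod>j\<in>{1..n}. \<psi> (scale_coords n c x j) ^ kk j)
        = (\<Prod>j\<in>{1..n}. \<psi> (c j) ^ kk j) * (\<Prod>j\<in>{1..n}. \<psi> (x j) ^ kk j)"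
      by (simp add: scale_coords_def mult_char_mult[OF \<psi>] power_mult_distrib flip: prod.distrib)
    moreover have "cnj (\<psi> (diag_form n a m (scale_coords n c x))) ^ k
        = cnj (\<psi> \<mu>) ^ k * cnj (\<psi> (diag_form n a m x)) ^ k"
      using c diag_form_scale_coords[of n c m \<mu> a x]
      by (simp add: mult_char_mult[OF \<psi>] power_mult_distrib)
    ultimately show "f (scale_coords n c x) = K * f x"
      by (simp add: f_def K_def)
  qed simp
  also have "\<dots> = K * sum f S"
    by (simp add: sum_distrib_left)
  finally have "sum f S = K * sum f S" .
  moreover have "T_sum n a m kk k \<psi> = sum f S / of_nat (CARD('a) - 1)"
    by (simp add: T_sum_def f_def S_def)
  ultimately show ?thesis
    by (metis K_def times_divide_eq_right)
qed

lemma T_sum_nonzero_imp_scaling_factor_eq_1: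
  fixes \<psi> :: "'a::{finite,field} \<Rightarrow> complex"
  assumes "\<psi> \<in> mult_chars" and "T_sum n a m kk k \<psi> \<noteq> 0"
    and "\<forall>j\<in>{1..n}. c j \<noteq> 0 \<and> c j ^ m j = \<mu>" and "\<mu> \<noteq> 0"
  shows "(\<Prod>j\<in>{1..n}. \<psi> (c j) ^ kk j) * cnj (\<psi> \<mu>) ^ k = 1"
  using T_sum_scale[OF assms(1,3,4), of a kk k] assms(2) by simp

context finite_field_generator
begin

lemma T_sum_nonzero_imp_power_int_eq_1:
  assumes \<psi>: "\<psi> \<in> mult_chars" and T: "T_sum n a m kk k \<psi> \<noteq> 0"
  defines "M \<equiv> Lcm (m ` {1..n})"
  shows "\<psi> g powi ((\<Sum>j\<in>{1..n}. int (kk j * (M div m j))) - int (k * M)) = 1"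
proof -
  define E where "E = (\<Sum>j\<in>{1..n}. kk j * (M div m j))"
  have "\<forall>j\<in>{1..n}. g ^ (M div m j) \<noteq> 0 \<and> (g ^ (M div m j)) ^ m j = g ^ M"
    using generator_nonzero by (simp add: M_def flip: power_mult)
  from T_sum_nonzero_imp_scaling_factor_eq_1[OF \<psi> T this]
  have "(\<Prod>j\<in>{1..n}. \<psi> g ^ (kk j * (M div m j))) * inverse (\<psi> g) ^ (k * M) = 1"
    using generator_nonzero
    by (simp add: mult_char_cnj[OF \<psi>] mult_char_power[OF \<psi>] power_inverse
        flip: power_mult) (simp add: mult.commute)
  then have "\<psi> g ^ E / \<psi> g ^ (k * M) = 1"
    by (simp add: E_def power_sum divide_inverse power_inverse)
  moreover have "\<psi> g \<noteq> 0"
    using \<psi> generator_nonzero unfolding mult_chars_def by blast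
  ultimately have "\<psi> g powi (int E - int (k * M)) = 1"
    using power_int_diff[of "\<psi> g" "int E" "int (k * M)"] by (simp only: power_int_of_nat simp_thms)
  then show ?thesis
    by (simp only: E_def of_nat_sum)
qed

lemma T_sum_nonzero_imp_power_eq_1:
  assumes \<psi>: "\<psi> \<in> mult_chars" and T: "T_sum n a m kk k \<psi> \<noteq> 0" and j: "j \<in> {1..n}"
  shows "\<psi> g ^ (kk j * (CARD('a) - 1) div gcd (m j) (CARD('a) - 1)) = 1"
proof -
  define e where "e = (CARD('a) - 1) div gcd (m j) (CARD('a) - 1)"
  define c where "c i = (if i = j then g ^ e else 1)" for i
  have "e * m j = (CARD('a) - 1) * (m j div gcd (m j) (CARD('a) - 1))"
    by (simp add: e_def div_mult_swap mult.commute)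
  then have "(g ^ e) ^ m j = (g ^ (CARD('a) - 1)) ^ (m j div gcd (m j) (CARD('a) - 1))"
    by (simp only: power_mult[symmetric])
  then have "(g ^ e) ^ m j = 1"
    by (simp only: generator_power_card_units power_one)
  then have "\<forall>i\<in>{1..n}. c i \<noteq> 0 \<and> c i ^ m i = 1"
    using generator_nonzero by (simp add: c_def)
  from T_sum_nonzero_imp_scaling_factor_eq_1[OF \<psi> T this]
  have "(\<Prod>i\<in>{1..n}. \<psi> (c i) ^ kk i) = 1"
    by (simp add: mult_char_one[OF \<psi>])
  moreover have "(\<Prod>i\<in>{1..n}. \<psi> (c i) ^ kk i) = (\<Prod>i\<in>{1..n}. if i = j then \<psi> g ^ (e * kk j) else 1)"
    by (rule prod.cong) (simp_all add: c_def mult_char_one[OF \<psi>] mult_char_power[OF \<psi>] power_mult)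
  ultimately have "\<psi> g ^ (e * kk j) = 1"
    using j by (simp add: prod.delta)
  then show ?thesis
    using j by (simp add: e_def div_mult_swap mult.commute)
qed

end

lemma T_sum_nonzero_imp_char_pow_trivial_d:
  fixes \<psi> :: "'a::{finite,field} \<Rightarrow> complex"
  assumes \<psi>: "\<psi> \<in> mult_chars" and T: "T_sum n a m kk k \<psi> \<noteq> 0"
  shows "char_pow_trivial \<psi> (d_of CARD('a) n kk m k)"
proof -
  obtain g :: 'a where "finite_field_generator g"
    using finite_field_mult_cyclic by (metis finite_field_generator.intro)
  then interpret finite_field_generator g .
  have z: "\<psi> g \<noteq> 0"
    using \<psi> generator_nonzero unfolding mult_chars_def by blast
  have "\<psi> g ^ Gcd ((\<lambda>j. kk j * (CARD('a) - 1) div gcd (m j) (CARD('a) - 1)) ` {1..n}) = 1"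
    using T_sum_nonzero_imp_power_eq_1[OF \<psi> T] z by (intro power_Gcd_eq_1) auto
  moreover have "\<psi> g ^ (CARD('a) - 1) = 1"
    using mult_char_root_of_unity[OF \<psi> generator_nonzero] .
  ultimately have "\<psi> g powi gcd (gcd ((\<Sum>j\<in>{1..n}. int (kk j * (Lcm (m ` {1..n}) div m j)))
      - int (k * Lcm (m ` {1..n}))) (int (CARD('a) - 1)))
      (int (Gcd ((\<lambda>j. kk j * (CARD('a) - 1) div gcd (m j) (CARD('a) - 1)) ` {1..n}))) = 1"
    using T_sum_nonzero_imp_power_int_eq_1[OF \<psi> T] z
    by (intro power_int_gcd_eq_1) (simp_all only: power_int_of_nat not_False_eq_True)
  then have "\<psi> g powi int (d_of CARD('a) n kk m k) = 1"
    unfolding d_of_def Let_def by simp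
  then show ?thesis
    by (simp add: char_pow_trivial_iff_generator[OF \<psi>])
qed

lemma T_sum_char_pow_trivial:
  fixes \<psi> :: "'a::{finite,field} \<Rightarrow> complex"
  assumes \<psi>: "char_pow_trivial \<psi> e" and "e dvd k" and "\<forall>j\<in>{1..n}. e dvd kk j"
  shows "T_sum n a m kk k \<psi>
    = of_nat (card {x \<in> Pi\<^sub>E {1..n} (\<lambda>_. UNIV - {0}). diag_form n a m x \<noteq> 0}) / of_nat (CARD('a) - 1)"
proof -
  have pow: "\<psi> y ^ e' = 1" if "y \<noteq> 0" and "e dvd e'" for y e'
    using \<psi> that unfolding char_pow_trivial_def by (auto elim!: dvdE simp: power_mult)
  have "(\<Prod>j\<in>{1..n}. \<psi> (x j) ^ kk j) * cnj (\<psi> (diag_form n a m x)) ^ k = 1"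
    if "x \<in> Pi\<^sub>E {1..n} (\<lambda>_. UNIV - {0})" and "diag_form n a m x \<noteq> 0" for x
    using that assms(2,3) by (auto simp: pow PiE_iff simp flip: complex_cnj_power intro!: prod.neutral)
  then show ?thesis
    by (simp add: T_sum_def)
qed

lemma card_nonzero_solutions_eq_char_sum:
  fixes b :: "'a::{finite,field}"
  assumes b: "b \<noteq> 0"
  shows "of_nat (card {x \<in> Pi\<^sub>E {1..n} (\<lambda>_. UNIV - {0}). diag_form n a m x \<noteq> 0
             \<and> diag_form n a m x ^ k = b * (\<Prod>j\<in>{1..n}. x j ^ kk j)})
       = (\<Sum>\<psi>\<in>mult_chars. \<psi> b * T_sum n a m kk k \<psi>)"
proof -
  define S where "S = {x \<in> Pi\<^sub>E {1..n} (\<lambda>_. UNIV - {0::'a}). diag_form n a m x \<noteq> 0}"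
  define w where "w x = b * (\<Prod>j\<in>{1..n}. x j ^ kk j) / diag_form n a m x ^ k" for x
  have w: "w x \<noteq> 0" "w x = 1 \<longleftrightarrow> diag_form n a m x ^ k = b * (\<Prod>j\<in>{1..n}. x j ^ kk j)" if "x \<in> S" for x
    using that b by (auto simp: w_def S_def PiE_iff)
  have summand: "\<psi> b * ((\<Prod>j\<in>{1..n}. \<psi> (x j) ^ kk j) * cnj (\<psi> (diag_form n a m x)) ^ k) = \<psi> (w x)"
    if \<psi>: "\<psi> \<in> mult_chars" and "x \<in> S" for \<psi> x
    using that by (simp add: S_def w_def mult_char_cnj mult_char_mult mult_char_prod mult_char_power
        mult_char_inverse divide_inverse power_inverse)
  have "(\<Sum>\<psi>\<in>mult_chars. \<psi> b * T_sum n a m kk k \<psi>)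
      = (\<Sum>\<psi>\<in>mult_chars. (\<Sum>x\<in>S. \<psi> (w x)) / of_nat (CARD('a) - 1))"
  proof (rule sum.cong[OF refl])
    fix \<psi> :: "'a \<Rightarrow> complex" assume \<psi>: "\<psi> \<in> mult_chars"
    have "\<psi> b * T_sum n a m kk k \<psi> = (\<Sum>x\<in>S. \<psi> b * ((\<Prod>j\<in>{1..n}. \<psi> (x j) ^ kk j)
        * cnj (\<psi> (diag_form n a m x)) ^ k)) / of_nat (CARD('a) - 1)"
      by (simp add: T_sum_def S_def sum_distrib_left sum_divide_distrib)
    also have "\<dots> = (\<Sum>x\<in>S. \<psi> (w x)) / of_nat (CARD('a) - 1)"
      using summand[OF \<psi>] by simp
    finally show "\<psi> b * T_sum n a m kk k \<psi> = (\<Sum>x\<in>S. \<psi> (w x)) / of_nat (CARD('a) - 1)" .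
  qed
  also have "\<dots> = (\<Sum>\<psi>\<in>mult_chars. \<Sum>x\<in>S. \<psi> (w x)) / of_nat (CARD('a) - 1)"
    by (simp add: sum_divide_distrib)
  also have "\<dots> = (\<Sum>x\<in>S. \<Sum>\<psi>\<in>mult_chars. \<psi> (w x)) / of_nat (CARD('a) - 1)"
    by (subst sum.swap) simp
  also have "\<dots> = (\<Sum>x\<in>S. if w x = 1 then of_nat (CARD('a) - 1) else 0) / of_nat (CARD('a) - 1)"
    using w(1) by (simp add: sum_mult_chars)
  also have "\<dots> = of_nat (card {x \<in> S. w x = 1})"
  proof -
    have "finite S" by (simp add: S_def finite_PiE)
    then have "(\<Sum>x\<in>S. if w x = 1 then of_nat (CARD('a) - 1) else 0)
        = of_nat (card {x \<in> S. w x = 1}) * (of_nat (CARD('a) - 1) :: complex)"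
      by (simp flip: sum.inter_filter)
    then show ?thesis
      using card_finite_field_ge_2[where 'a='a] by simp
  qed
  finally show ?thesis
    by (simp add: S_def w cong: conj_cong)
qed

lemma card_solutions_decompose:
  fixes a :: "nat \<Rightarrow> 'a::{finite,field}"
  assumes "b \<noteq> 0" and "k > 0" and "\<forall>j\<in>{1..n}. kk j > 0"
  shows "card {x \<in> Pi\<^sub>E {1..n} (\<lambda>_. UNIV). diag_form n a m x ^ k = b * (\<Prod>j\<in>{1..n}. x j ^ kk j)}
       + card {x \<in> Pi\<^sub>E {1..n} (\<lambda>_. UNIV - {0}). diag_form n a m x = 0}
       = card {x \<in> Pi\<^sub>E {1..n} (\<lambda>_. UNIV). diag_form n a m x = 0}
       + card {x \<in> Pi\<^sub>E {1..n} (\<lambda>_. UNIV - {0}). diag_form n a m x \<noteq> 0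
             \<and> diag_form n a m x ^ k = b * (\<Prod>j\<in>{1..n}. x j ^ kk j)}"
    (is "card ?Sol + card ?Zs = card ?Z + card ?B")
proof -
  let ?D = "diag_form n a m" and ?P = "\<lambda>x :: nat \<Rightarrow> 'a. \<Prod>j\<in>{1..n}. x j ^ kk j"
  have prod_eq_0: "?P x = 0 \<longleftrightarrow> x \<notin> Pi\<^sub>E {1..n} (\<lambda>_. UNIV - {0})"
    if "x \<in> Pi\<^sub>E {1..n} (\<lambda>_. UNIV)" for x
    using that assms(3) by (auto simp: PiE_iff prod_zero_iff)
  have "x \<in> ?Sol \<longleftrightarrow> x \<in> (?Z - ?Zs) \<union> ?B" for x
  proof (cases "x \<in> Pi\<^sub>E {1..n} (\<lambda>_. UNIV)")
    case True
    show ?thesis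
    proof (cases "x \<in> Pi\<^sub>E {1..n} (\<lambda>_. UNIV - {0})")
      case nonzero: True
      then have "?P x \<noteq> 0"
        using prod_eq_0[OF True] by simp
      then have "?D x ^ k = b * ?P x \<Longrightarrow> ?D x \<noteq> 0"
        using assms(1,2) by (metis mult_eq_0_iff zero_power)
      then show ?thesis
        using True nonzero by auto
    next
      case False
      then have "?P x = 0"
        using prod_eq_0[OF True] by simp
      then show ?thesis
        using True False assms(2) by (simp del: prod_zero_iff)
    qed
  qed (auto simp: PiE_iff)
  then have "?Sol = (?Z - ?Zs) \<union> ?B"
    by blast
  moreover have "?Zs \<subseteq> ?Z"
    by (auto simp: PiE_iff)
  moreover have "finite ?Z" and "finite ?B"
    by (auto intro!: finite_subset[of _ "Pi\<^sub>E {1..n} (\<lambda>_. UNIV)"] finite_PiE)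
  ultimately have "card ?Sol = card (?Z - ?Zs) + card ?B" and "card (?Z - ?Zs) + card ?Zs = card ?Z"
    by (simp_all add: card_Un_disjoint disjoint_iff card_Diff_subset card_mono finite_subset)
  then show ?thesis
    by simp
qed

lemma card_nonzero_form_values:
  "card {x \<in> Pi\<^sub>E {1..n} (\<lambda>_. UNIV - {0::'a::{finite,field}}). diag_form n a m x \<noteq> 0}
   + card {x \<in> Pi\<^sub>E {1..n} (\<lambda>_. UNIV - {0::'a}). diag_form n a m x = 0} = (CARD('a) - 1) ^ n"
proof -
  let ?P = "Pi\<^sub>E {1..n} (\<lambda>_. UNIV - {0::'a})"
  have "card ?P = (CARD('a) - 1) ^ n"
    by (simp add: card_PiE card_Diff_singleton)
  moreover have "?P = {x \<in> ?P. diag_form n a m x \<noteq> 0} \<union> {x \<in> ?P. diag_form n a m x = 0}"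
    by blast
  moreover have "card ({x \<in> ?P. diag_form n a m x \<noteq> 0} \<union> {x \<in> ?P. diag_form n a m x = 0})
      = card {x \<in> ?P. diag_form n a m x \<noteq> 0} + card {x \<in> ?P. diag_form n a m x = 0}"
    by (rule card_Un_disjoint) (auto intro!: finite_subset[of _ ?P] finite_PiE)
  ultimately show ?thesis
    by simp
qed

lemma k0_of_dvd:
  shows "k0_of q n kk k dvd k" and "k0_of q n kk k dvd q - 1"
    and "j \<in> {1..n} \<Longrightarrow> k0_of q n kk k dvd kk j"
  unfolding k0_of_def by (auto intro: dvd_trans[OF gcd_dvd2] dvd_trans[OF gcd_dvd1] Gcd_dvd)

lemma k0_of_pos: "k > 0 \<Longrightarrow> k0_of q n kk k > 0"
  by (simp add: k0_of_def)

lemma sum_mult_chars_T_sum_split: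
  fixes b :: "'a::{finite,field}"
  assumes "e > 0" and "e dvd CARD('a) - 1" and "e dvd k" and "\<forall>j\<in>{1..n}. e dvd kk j"
    and "b \<noteq> 0" and "\<exists>y. y ^ e = b"
  shows "(\<Sum>\<psi>\<in>mult_chars. \<psi> b * T_sum n a m kk k \<psi>)
       = of_nat e * of_nat (card {x \<in> Pi\<^sub>E {1..n} (\<lambda>_. UNIV - {0}). diag_form n a m x \<noteq> 0})
           / of_nat (CARD('a) - 1)
       + (\<Sum>\<psi>\<in>{\<psi> \<in> mult_chars. char_pow_trivial \<psi> (d_of CARD('a) n kk m k) \<and> \<not> char_pow_trivial \<psi> e}.
            \<psi> b * T_sum n a m kk k \<psi>)"
proof -
  let ?f = "\<lambda>\<psi>. \<psi> b * T_sum n a m kk k \<psi>" and ?E = "{\<psi>. char_pow_trivial \<psi> e}"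
  let ?c = "of_nat (card {x \<in> Pi\<^sub>E {1..n} (\<lambda>_. UNIV - {0::'a}). diag_form n a m x \<noteq> 0})
    / of_nat (CARD('a) - 1) :: complex"
  obtain y where y: "y ^ e = b" using assms(6) by blast
  have "?f \<psi> = ?c" if "\<psi> \<in> mult_chars \<inter> ?E" for \<psi>
  proof -
    have "y \<noteq> 0" using y assms(1,5) by auto
    then have "\<psi> b = 1"
      using that y by (auto simp: char_pow_trivial_def simp flip: mult_char_power)
    moreover have "T_sum n a m kk k \<psi> = ?c"
      using that assms(3,4) by (intro T_sum_char_pow_trivial) auto
    ultimately show ?thesis
      by simp
  qed
  then have "sum ?f (mult_chars \<inter> ?E) = of_nat e * ?c"
    using card_mult_chars_pow_trivial[OF assms(1,2)] by (simp add: Int_def)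
  moreover have "sum ?f (mult_chars - ?E)
      = sum ?f {\<psi> \<in> mult_chars. char_pow_trivial \<psi> (d_of CARD('a) n kk m k) \<and> \<not> char_pow_trivial \<psi> e}"
    using T_sum_nonzero_imp_char_pow_trivial_d finite_mult_chars
    by (intro sum.mono_neutral_right) auto
  ultimately show ?thesis
    using sum.Int_Diff[OF finite_mult_chars, of ?f ?E] by (simp add: mult.assoc)
qed

lemma solution_count_rearrange:
  fixes Sol Z Zs B S k0 n q :: nat and \<Sigma> :: complex
  assumes "q \<ge> 2" and "n \<ge> 1"
    and "Sol + Zs = Z + B" and "S + Zs = (q - 1) ^ n"
    and "of_nat B = of_nat k0 * of_nat S / of_nat (q - 1) + \<Sigma>"
  shows "of_nat Sol = of_nat k0 * of_nat (q - 1) ^ (n - 1) + of_nat Z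
           - (of_nat k0 + of_nat q - 1) / (of_nat q - 1) * of_nat Zs + \<Sigma>"
proof -
  define N :: complex where "N = of_nat q - 1"
  have N: "N \<noteq> 0" and N_eq: "of_nat (q - 1) = N"
    using assms(1) by (simp_all add: N_def of_nat_diff)
  have Sol: "of_nat Sol = of_nat Z + of_nat B - (of_nat Zs :: complex)"
    using arg_cong[OF assms(3), of "of_nat :: nat \<Rightarrow> complex"] by (simp add: algebra_simps)
  have "of_nat S + of_nat Zs = N ^ n"
    using arg_cong[OF assms(4), of "of_nat :: nat \<Rightarrow> complex"] unfolding of_nat_add of_nat_power N_eq .
  then have S: "of_nat S = N * N ^ (n - 1) - of_nat Zs"
    using assms(2) by (simp add: algebra_simps flip: power_Suc)
  have "of_nat Sol = of_nat Z + (of_nat k0 * (N * N ^ (n - 1) - of_nat Zs) / N + \<Sigma>) - of_nat Zs"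
    unfolding Sol assms(5) S N_eq ..
  also have "\<dots> = of_nat k0 * N ^ (n - 1) + of_nat Z - (of_nat k0 + N) / N * of_nat Zs + \<Sigma>"
  proof -
    have "of_nat k0 * (N * N ^ (n - 1) - of_nat Zs) / N = of_nat k0 * N ^ (n - 1) - of_nat k0 / N * of_nat Zs"
      using N by (simp add: right_diff_distrib diff_divide_distrib)
    moreover have "(of_nat k0 + N) / N * of_nat Zs = of_nat k0 / N * of_nat Zs + of_nat Zs"
      using N by (simp add: add_divide_distrib distrib_right)
    ultimately show ?thesis
      by (simp add: algebra_simps)
  qed
  finally show ?thesis
    using N_eq unfolding N_def by (simp only: add_diff_eq)
qed

theorem corollary1:
  fixes a :: "nat \<Rightarrow> 'a::{finite,field}" and b :: 'a
    and n k :: nat and kk m :: "nat \<Rightarrow> nat"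
  assumes "n \<ge> 2"
    and "\<forall>j\<in>{1..n}. a j \<noteq> 0" and "b \<noteq> 0"
    and "k > 0" and "\<forall>j\<in>{1..n}. kk j > 0" and "\<forall>j\<in>{1..n}. m j > 0"
    and "\<exists>y::'a. y ^ k0_of (card (UNIV :: 'a set)) n kk k = b"
  shows "of_nat (card {x \<in> Pi\<^sub>E {1..n} (\<lambda>_. UNIV).
                   (diag_form n a m x) ^ k = b * (\<Prod>j\<in>{1..n}. x j ^ kk j)})
       = of_nat (k0_of (card (UNIV :: 'a set)) n kk k) * of_nat ((card (UNIV :: 'a set)) - 1) ^ (n - 1)
         + of_nat (card {x \<in> Pi\<^sub>E {1..n} (\<lambda>_. UNIV). diag_form n a m x = 0})
         - (of_nat (k0_of (card (UNIV :: 'a set)) n kk k) + of_nat (card (UNIV :: 'a set)) - 1) / (of_nat (card (UNIV :: 'a set)) - 1)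
           * of_nat (card {x \<in> Pi\<^sub>E {1..n} (\<lambda>_. UNIV - {0}). diag_form n a m x = 0})
         + (\<Sum>\<psi>\<in>{\<psi> \<in> mult_chars. char_pow_trivial \<psi> (d_of (card (UNIV :: 'a set)) n kk m k)
                              \<and> \<not> char_pow_trivial \<psi> (k0_of (card (UNIV :: 'a set)) n kk k)}.
              \<psi> b * T_sum n a m kk k \<psi>)"
proof -
  let ?k0 = "k0_of CARD('a) n kk k"
  have k0: "?k0 > 0" "?k0 dvd CARD('a) - 1" "?k0 dvd k" "\<forall>j\<in>{1..n}. ?k0 dvd kk j"
    using k0_of_pos[OF assms(4)] k0_of_dvd by auto
  have "of_nat (card {x \<in> Pi\<^sub>E {1..n} (\<lambda>_. UNIV - {0}). diag_form n a m x \<noteq> 0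
             \<and> diag_form n a m x ^ k = b * (\<Prod>j\<in>{1..n}. x j ^ kk j)})
      = of_nat ?k0 * of_nat (card {x \<in> Pi\<^sub>E {1..n} (\<lambda>_. UNIV - {0}). diag_form n a m x \<noteq> 0})
          / of_nat (CARD('a) - 1)
      + (\<Sum>\<psi>\<in>{\<psi> \<in> mult_chars. char_pow_trivial \<psi> (d_of CARD('a) n kk m k) \<and> \<not> char_pow_trivial \<psi> ?k0}.
           \<psi> b * T_sum n a m kk k \<psi>)"
    using card_nonzero_solutions_eq_char_sum[OF assms(3)] sum_mult_chars_T_sum_split[OF k0 assms(3,7)]
    by simp
  from solution_count_rearrange[OF card_finite_field_ge_2 _ card_solutions_decompose[OF assms(3-5)]
      card_nonzero_form_values this]
  show ?thesis
    using assms(1) by simp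
qed

end
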